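(* Let $(V,E,d)$ be a multi-weighted game graph and $v\in V$. If the value of the mean-payoff game $\mathrm{MP}(V,E^{(1)})$ at $v$ is non-negative, then every positional optimal strategy of Player 1 (Max) in $\mathrm{MP}(V,E^{(1)})$ is winning for Player 1 from $v$ in the lexicographic energy game $\mathrm{LexEn}(V,E,d)$. If the value at $v$ is negative, then every positional optimal strategy of Player 2 (Min) in $\mathrm{MP}(V,E^{(1)})$ is winning for Player 2 from $v$ in $\mathrm{LexEn}(V,E,d)$.
   Context: A multi-weighted game graph is a tuple $(V,E,d)$ where $d\ge1$, $V=V_1\uplus V_2$ is a finite vertex set (Player 1 and Player 2 vertices), and $E\subseteq V\times\mathbb Z^d\times V$ is a finite set of edges $v\xrightarrow{\vec w}v'$, every vertex having an outgoing edge; players strictly alternate, edge weights are determined by endpoints, and not all weights are zero. Plays are infinite paths $v_0\xrightarrow{\vec w_1}v_1\cdots$; strategies map finite paths ending in a player's vertex to an outgoing edge; positional strategies depend only on the last vertex; a strategy is winning from $v$ if all plays from $v$ consistent with it are won. In $\mathrm{LexEn}(V,E,d)$, a play is won by Player 2 if there exists $1\le k\le d$ with $\limsup_n\sum_{j\le n}\vec w_j(k)=-\infty$ and $\liminf_n\sum_{j\le n}\vec w_j(\ell)<+\infty$ for all $\ell<k$; otherwise by Player 1. The weighted edge set $E^{(1)}$: define $E^{(d)}$ giving edge $v\xrightarrow{\vec w}v'$ weight $r_d=\vec w(d)$, and for $i=d-1,\dots,1$, $E^{(i)}$ giving it weight $r_i=\vec w(i)(|V|\cdot\|E^{(i+1)}\|+1)+r_{i+1}$,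 with $\|E^{(i+1)}\|$ the maximal absolute weight in $E^{(i+1)}$. The mean-payoff game $\mathrm{MP}(V,E^{(1)})$ is played on the same vertices with these integer weights; on a play with weights $u_1,u_2,\dots$, Max (Player 1) gains $\liminf_n(u_1+\dots+u_n)/n$ and Min (Player 2) loses $\limsup_n(u_1+\dots+u_n)/n$. Optimal strategies are those guaranteeing at least as good a payoff as any other strategy; positional optimal strategies exist for both players and yield a common value at each initial vertex. *)

theory Defs
  imports Complex_Main "HOL-Library.Extended_Real" "HOL-Library.Liminf_Limsup"
begin

text \<open>Edges v --w--> v' are triples (v, w, v'); a weight vector in Z^d is a function
  w :: nat => int whose meaningful components are w 1, ..., w d (all other components are 0).\<close>

type_synonym 'v edge = "'v \<times> (nat \<Rightarrow> int) \<times> 'v"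

definition game_graph :: "'v set \<Rightarrow> 'v set \<Rightarrow> 'v edge set \<Rightarrow> nat \<Rightarrow> bool" where
  "game_graph V1 V2 E d \<longleftrightarrow>
     d \<ge> 1 \<and> finite V1 \<and> finite V2 \<and> V1 \<inter> V2 = {} \<and> finite E \<and>
     (\<forall>(a, w, b) \<in> E. a \<in> V1 \<union> V2 \<and> b \<in> V1 \<union> V2 \<and> (\<forall>k. k \<notin> {1..d} \<longrightarrow> w k = 0)) \<and>
     (\<forall>a \<in> V1 \<union> V2. \<exists>w b. (a, w, b) \<in> E) \<and>
     (\<forall>(a, w, b) \<in> E. (a \<in> V1 \<longleftrightarrow> b \<in> V2)) \<and>
     (\<forall>a w w' b. (a, w, b) \<in> E \<longrightarrow> (a, w', b) \<in> E \<longrightarrow> w = w') \<and>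
     (\<exists>(a, w, b) \<in> E. \<exists>k \<in> {1..d}. w k \<noteq> 0)"

text \<open>scal k n E d w is the weight of an edge with weight vector w in E^(d-k),
  where n = |V|.  So scal 0 = r_d, and scal (Suc k) corresponds to index i = d - Suc k.\<close>

primrec scal :: "nat \<Rightarrow> nat \<Rightarrow> 'v edge set \<Rightarrow> nat \<Rightarrow> (nat \<Rightarrow> int) \<Rightarrow> int" where
  "scal 0 n E d w = w d"
| "scal (Suc k) n E d w =
     w (d - Suc k) * (int n * Max {\<bar>scal k n E d w'\<bar> | w'. \<exists>a b. (a, w', b) \<in> E} + 1)
     + scal k n E d w"

definition mpw :: "'v set \<Rightarrow> 'v edge set \<Rightarrow> nat \<Rightarrow> (nat \<Rightarrow> int) \<Rightarrow> int" where
  "mpw V E d w = scal (d - 1) (card V) E d w"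

definition play :: "'v edge set \<Rightarrow> 'v \<Rightarrow> (nat \<Rightarrow> 'v edge) \<Rightarrow> bool" where
  "play E u e \<longleftrightarrow> (\<forall>n. e n \<in> E) \<and> fst (e 0) = u \<and> (\<forall>n. snd (snd (e n)) = fst (e (Suc n)))"

text \<open>A finite path is a start vertex together with a list of edges; its last vertex:\<close>
definition lastv :: "'v \<Rightarrow> 'v edge list \<Rightarrow> 'v" where
  "lastv u es = (if es = [] then u else snd (snd (last es)))"

definition strategy :: "'v set \<Rightarrow> 'v edge set \<Rightarrow> ('v \<Rightarrow> 'v edge list \<Rightarrow> 'v edge) \<Rightarrow> bool" where
  "strategy P E \<sigma> \<longleftrightarrow>
     (\<forall>u es. lastv u es \<in> P \<longrightarrow> \<sigma> u es \<in> E \<and> fst (\<sigma> u es) = lastv u es)"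

definition positional :: "'v set \<Rightarrow> 'v edge set \<Rightarrow> ('v \<Rightarrow> 'v edge) \<Rightarrow> bool" where
  "positional P E \<sigma> \<longleftrightarrow> (\<forall>u \<in> P. \<sigma> u \<in> E \<and> fst (\<sigma> u) = u)"

definition lift :: "('v \<Rightarrow> 'v edge) \<Rightarrow> 'v \<Rightarrow> 'v edge list \<Rightarrow> 'v edge" where
  "lift \<sigma> u es = \<sigma> (lastv u es)"

definition consistent :: "'v set \<Rightarrow> ('v \<Rightarrow> 'v edge list \<Rightarrow> 'v edge) \<Rightarrow> 'v \<Rightarrow> (nat \<Rightarrow> 'v edge) \<Rightarrow> bool" where
  "consistent P \<sigma> u e \<longleftrightarrow> (\<forall>n. fst (e n) \<in> P \<longrightarrow> e n = \<sigma> u (map e [0..<n]))"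

definition avg :: "((nat \<Rightarrow> int) \<Rightarrow> int) \<Rightarrow> (nat \<Rightarrow> 'v edge) \<Rightarrow> nat \<Rightarrow> real" where
  "avg r e n = real_of_int (\<Sum>j\<le>n. r (fst (snd (e j)))) / real (Suc n)"

definition guar_max :: "'v set \<Rightarrow> 'v edge set \<Rightarrow> ((nat \<Rightarrow> int) \<Rightarrow> int)
    \<Rightarrow> ('v \<Rightarrow> 'v edge list \<Rightarrow> 'v edge) \<Rightarrow> 'v \<Rightarrow> ereal" where
  "guar_max V1 E r \<sigma> u =
     Inf {liminf (\<lambda>n. ereal (avg r e n)) | e. play E u e \<and> consistent V1 \<sigma> u e}"

definition guar_min :: "'v set \<Rightarrow> 'v edge set \<Rightarrow> ((nat \<Rightarrow> int) \<Rightarrow> int)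
    \<Rightarrow> ('v \<Rightarrow> 'v edge list \<Rightarrow> 'v edge) \<Rightarrow> 'v \<Rightarrow> ereal" where
  "guar_min V2 E r \<tau> u =
     Sup {limsup (\<lambda>n. ereal (avg r e n)) | e. play E u e \<and> consistent V2 \<tau> u e}"

text \<open>Value of the mean-payoff game (as the best guarantee of Max; equals Min's by determinacy).\<close>
definition mp_value :: "'v set \<Rightarrow> 'v edge set \<Rightarrow> ((nat \<Rightarrow> int) \<Rightarrow> int) \<Rightarrow> 'v \<Rightarrow> ereal" where
  "mp_value V1 E r u = Sup {guar_max V1 E r \<sigma> u | \<sigma>. strategy V1 E \<sigma>}"

definition optimal_max :: "'v set \<Rightarrow> 'v set \<Rightarrow> 'v edge set \<Rightarrow> ((nat \<Rightarrow> int) \<Rightarrow> int)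
    \<Rightarrow> ('v \<Rightarrow> 'v edge list \<Rightarrow> 'v edge) \<Rightarrow> bool" where
  "optimal_max V1 V2 E r \<sigma> \<longleftrightarrow> strategy V1 E \<sigma> \<and>
     (\<forall>u \<in> V1 \<union> V2. \<forall>\<sigma>'. strategy V1 E \<sigma>' \<longrightarrow> guar_max V1 E r \<sigma>' u \<le> guar_max V1 E r \<sigma> u)"

definition optimal_min :: "'v set \<Rightarrow> 'v set \<Rightarrow> 'v edge set \<Rightarrow> ((nat \<Rightarrow> int) \<Rightarrow> int)
    \<Rightarrow> ('v \<Rightarrow> 'v edge list \<Rightarrow> 'v edge) \<Rightarrow> bool" where
  "optimal_min V1 V2 E r \<tau> \<longleftrightarrow> strategy V2 E \<tau> \<and>
     (\<forall>u \<in> V1 \<union> V2. \<forall>\<tau>'. strategy V2 E \<tau>' \<longrightarrow> guar_min V2 E r \<tau> u \<le> guar_min V2 E r \<tau>' u)"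

definition psum :: "(nat \<Rightarrow> 'v edge) \<Rightarrow> nat \<Rightarrow> nat \<Rightarrow> ereal" where
  "psum e k n = ereal (real_of_int (\<Sum>j\<le>n. fst (snd (e j)) k))"

definition lex_win2 :: "nat \<Rightarrow> (nat \<Rightarrow> 'v edge) \<Rightarrow> bool" where
  "lex_win2 d e \<longleftrightarrow> (\<exists>k \<in> {1..d}. limsup (psum e k) = -\<infinity> \<and>
      (\<forall>l \<in> {1..<k}. liminf (psum e l) < \<infinity>))"

definition lex_win1 :: "nat \<Rightarrow> (nat \<Rightarrow> 'v edge) \<Rightarrow> bool" where
  "lex_win1 d e \<longleftrightarrow> \<not> lex_win2 d e"

definition winning1 :: "'v set \<Rightarrow> 'v edge set \<Rightarrow> nat \<Rightarrow> ('v \<Rightarrow> 'v edge list \<Rightarrow> 'v edge) \<Rightarrow> 'v \<Rightarrow> bool" where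
  "winning1 V1 E d \<sigma> u \<longleftrightarrow> (\<forall>e. play E u e \<and> consistent V1 \<sigma> u e \<longrightarrow> lex_win1 d e)"

definition winning2 :: "'v set \<Rightarrow> 'v edge set \<Rightarrow> nat \<Rightarrow> ('v \<Rightarrow> 'v edge list \<Rightarrow> 'v edge) \<Rightarrow> 'v \<Rightarrow> bool" where
  "winning2 V2 E d \<tau> u \<longleftrightarrow> (\<forall>e. play E u e \<and> consistent V2 \<tau> u e \<longrightarrow> lex_win2 d e)"

end

theory Submission
  imports Defs
begin

text \<open>
  Deleting cycles as soon as they close splits every play into simple cycles plus a simple path,
  whose weight is bounded.  On a simple cycle the scalarised weight of \<open>E\<^sup>(\<^sup>1\<^sup>)\<close> has the sign of the
  lexicographically first nonzero coordinate of the weight vector: each factor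
  \<open>|V| \<cdot> \<parallel>E\<^sup>(\<^sup>i\<^sup>+\<^sup>1\<^sup>)\<parallel> + 1\<close> lets one coordinate dominate all later ones.

  If the value is non-negative, every cycle closed along a play consistent with an optimal positional
  strategy of Max has non-negative scalarised weight, since otherwise the lasso repeating it would have
  negative mean payoff.  So all cycle vectors are lexicographically non-negative, and by induction on
  the coordinate no coordinate can tend to \<open>-\<infinity>\<close> while all earlier ones stay bounded above.
  If the value is negative, determinacy of the first-cycle game yields a strategy of Min with negative
  mean payoff; then every cycle closed against an optimal positional strategy of Min is negative, and
  infinitely many are closed.  Taking the least coordinate that is the first nonzero one of infinitely
  many of these cycles, that coordinate tends to \<open>-\<infinity>\<close> and all earlier ones are eventually
  constant.\<close>

section \<open>Paths and the cycle stack of a play\<close>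

definition tgt :: "'v edge \<Rightarrow> 'v" where
  "tgt x = snd (snd x)"

fun walk :: "'v \<Rightarrow> 'v edge list \<Rightarrow> bool" where
  "walk u [] = True"
| "walk u (x # s) \<longleftrightarrow> fst x = u \<and> walk (tgt x) s"

definition verts :: "'v \<Rightarrow> 'v edge list \<Rightarrow> 'v list" where
  "verts u s = u # map tgt s"

lemma lastv_Nil [simp]: "lastv u [] = u"
  by (simp add: lastv_def)

lemma lastv_Cons [simp]: "lastv u (x # s) = lastv (tgt x) s"
  by (simp add: lastv_def tgt_def)

lemma lastv_append: "lastv u (s @ t) = lastv (lastv u s) t"
  by (induction s arbitrary: u) auto

lemma lastv_snoc [simp]: "lastv u (s @ [x]) = tgt x"
  by (simp add: lastv_append)

lemma lastv_eq_last_verts: "lastv u s = last (verts u s)"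
  by (induction s arbitrary: u) (auto simp: verts_def)

lemma length_verts [simp]: "length (verts u s) = Suc (length s)"
  by (simp add: verts_def)

lemma verts_take: "verts u (take i s) = take (Suc i) (verts u s)"
  by (simp add: verts_def take_map)

lemma lastv_take: "i \<le> length s \<Longrightarrow> lastv u (take i s) = verts u s ! i"
proof -
  assume "i \<le> length s"
  then have "take (Suc i) (verts u s) = take i (verts u s) @ [verts u s ! i]"
    by (simp add: take_Suc_conv_app_nth)
  then show ?thesis by (simp add: lastv_eq_last_verts verts_take)
qed

lemma walk_append: "walk u (s @ t) \<longleftrightarrow> walk u s \<and> walk (lastv u s) t"
  by (induction s arbitrary: u) auto

lemma walk_nth_fst: "walk u s \<Longrightarrow> j < length s \<Longrightarrow> fst (s ! j) = verts u s ! j"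
proof (induction s arbitrary: u j)
  case (Cons x s)
  then show ?case by (cases j) (auto simp: verts_def)
qed simp

definition simple_path :: "'v edge set \<Rightarrow> 'v set \<Rightarrow> 'v \<Rightarrow> 'v edge list \<Rightarrow> bool" where
  "simple_path A V u s \<longleftrightarrow> walk u s \<and> distinct (verts u s) \<and> set (verts u s) \<subseteq> V \<and> set s \<subseteq> A"

lemma simple_path_length:
  assumes "simple_path A V u s" "finite V"
  shows "length s < card V"
proof -
  have "Suc (length s) = card (set (verts u s))"
    using assms(1) by (simp add: simple_path_def distinct_card)
  also have "\<dots> \<le> card V"
    using assms by (simp add: simple_path_def card_mono)
  finally show ?thesis by simp
qed

text \<open>
  The stack of a play is the simple path obtained by deleting cycles as soon as they close:
  an edge whose target already lies on the stack pops the cycle it closes, otherwise it is pushed.\<close>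

definition closes_cycle :: "'v \<Rightarrow> 'v edge list \<Rightarrow> 'v edge \<Rightarrow> bool" where
  "closes_cycle u s x \<longleftrightarrow> tgt x \<in> set (verts u s)"

definition cycle_start :: "'v \<Rightarrow> 'v edge list \<Rightarrow> 'v edge \<Rightarrow> nat" where
  "cycle_start u s x = length (takeWhile (\<lambda>y. y \<noteq> tgt x) (verts u s))"

definition stack_step :: "'v \<Rightarrow> 'v edge list \<Rightarrow> 'v edge \<Rightarrow> 'v edge list" where
  "stack_step u s x = (if closes_cycle u s x then take (cycle_start u s x) s else s @ [x])"

definition popped_cycle :: "'v \<Rightarrow> 'v edge list \<Rightarrow> 'v edge \<Rightarrow> 'v edge list" where
  "popped_cycle u s x = drop (cycle_start u s x) s @ [x]"

lemma length_takeWhile_neq_less: "y \<in> set xs \<Longrightarrow> length (takeWhile (\<lambda>z. z \<noteq> y) xs) < length xs"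
  by (induction xs) auto

lemma cycle_start:
  assumes "closes_cycle u s x"
  shows "cycle_start u s x \<le> length s" "verts u s ! cycle_start u s x = tgt x"
proof -
  have "cycle_start u s x < length (verts u s)"
    using assms unfolding closes_cycle_def cycle_start_def by (rule length_takeWhile_neq_less)
  then show "cycle_start u s x \<le> length s" by simp
  from nth_length_takeWhile[of "\<lambda>y. y \<noteq> tgt x"] \<open>cycle_start u s x < length (verts u s)\<close>
  show "verts u s ! cycle_start u s x = tgt x"
    unfolding cycle_start_def by blast
qed

lemma lastv_take_cycle_start:
  "closes_cycle u s x \<Longrightarrow> lastv u (take (cycle_start u s x) s) = tgt x"
  using cycle_start lastv_take by metis

lemma lastv_stack_step: "lastv u (stack_step u s x) = tgt x"
  by (simp add: stack_step_def lastv_take_cycle_start)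

lemma simple_path_stack_step:
  assumes "simple_path A V u s" "x \<in> A" "fst x = lastv u s" "tgt x \<in> V"
  shows "simple_path A V u (stack_step u s x)"
proof (cases "closes_cycle u s x")
  case True
  let ?t = "take (cycle_start u s x) s"
  have "walk u ?t"
    using assms(1) unfolding simple_path_def by (metis append_take_drop_id walk_append)
  moreover have "distinct (verts u ?t) \<and> set (verts u ?t) \<subseteq> V \<and> set ?t \<subseteq> A"
    using assms(1) unfolding simple_path_def verts_take by (meson distinct_take order_trans set_take_subset)
  ultimately show ?thesis
    using True by (simp add: stack_step_def simple_path_def)
next
  case False
  then show ?thesis
    using assms by (auto simp: stack_step_def simple_path_def walk_append closes_cycle_def verts_def)
qed

lemma popped_cycle_is_cycle:
  assumes "simple_path A V u s" "x \<in> A" "fst x = lastv u s" "closes_cycle u s x" "finite V"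
  shows "walk (tgt x) (popped_cycle u s x)" "lastv (tgt x) (popped_cycle u s x) = tgt x"
    "set (popped_cycle u s x) \<subseteq> A" "length (popped_cycle u s x) \<le> card V"
    "popped_cycle u s x \<noteq> []"
proof -
  let ?i = "cycle_start u s x"
  have split: "s = take ?i s @ drop ?i s" by simp
  have "walk (tgt x) (drop ?i s)" "lastv (tgt x) (drop ?i s) = lastv u s"
    using assms(1,4) lastv_take_cycle_start[OF assms(4)] split unfolding simple_path_def
    by (metis walk_append, metis lastv_append)
  then show "walk (tgt x) (popped_cycle u s x)"
    using assms(3) by (simp add: popped_cycle_def walk_append)
  show "set (popped_cycle u s x) \<subseteq> A"
    using assms(1,2) unfolding simple_path_def popped_cycle_def by (auto dest: in_set_dropD)
  show "length (popped_cycle u s x) \<le> card V"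
    using simple_path_length[OF assms(1,5)] by (simp add: popped_cycle_def)
qed (simp_all add: popped_cycle_def)

lemma sum_list_stack_step:
  "sum_list (map f s) + f x = sum_list (map f (stack_step u s x))
     + (if closes_cycle u s x then sum_list (map f (popped_cycle u s x)) else 0)"
proof (cases "closes_cycle u s x")
  case True
  have "sum_list (map f s) = sum_list (map f (take (cycle_start u s x) s))
      + sum_list (map f (drop (cycle_start u s x) s))"
    by (metis append_take_drop_id map_append sum_list_append)
  then show ?thesis using True by (simp add: stack_step_def popped_cycle_def algebra_simps)
qed (simp add: stack_step_def)

definition stack_of :: "'v \<Rightarrow> 'v edge list \<Rightarrow> 'v edge list" where
  "stack_of u es = foldl (stack_step u) [] es"

definition play_stack :: "'v \<Rightarrow> (nat \<Rightarrow> 'v edge) \<Rightarrow> nat \<Rightarrow> 'v edge list" where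
  "play_stack u e n = stack_of u (map e [0..<n])"

definition pops :: "'v \<Rightarrow> (nat \<Rightarrow> 'v edge) \<Rightarrow> nat \<Rightarrow> bool" where
  "pops u e m \<longleftrightarrow> closes_cycle u (play_stack u e m) (e m)"

definition play_cycle :: "'v \<Rightarrow> (nat \<Rightarrow> 'v edge) \<Rightarrow> nat \<Rightarrow> 'v edge list" where
  "play_cycle u e m = popped_cycle u (play_stack u e m) (e m)"

definition popped_sum :: "('v edge \<Rightarrow> 'a::comm_monoid_add) \<Rightarrow> 'v \<Rightarrow> (nat \<Rightarrow> 'v edge) \<Rightarrow> nat \<Rightarrow> 'a" where
  "popped_sum f u e m = (if pops u e m then sum_list (map f (play_cycle u e m)) else 0)"

lemma play_stack_0 [simp]: "play_stack u e 0 = []"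
  by (simp add: play_stack_def stack_of_def)

lemma play_stack_Suc: "play_stack u e (Suc n) = stack_step u (play_stack u e n) (e n)"
  by (simp add: play_stack_def stack_of_def)

lemma play_edge: "play E u e \<Longrightarrow> e n \<in> E"
  by (simp add: play_def)

lemma play_lastv: "play E u e \<Longrightarrow> lastv u (map e [0..<n]) = fst (e n)"
  by (cases n) (auto simp: play_def lastv_def tgt_def)

lemma lastv_play_stack: "play A u e \<Longrightarrow> lastv u (play_stack u e n) = fst (e n)"
  by (cases n) (auto simp: play_stack_Suc lastv_stack_step play_def tgt_def)

lemma play_stack_simple_path:
  assumes "play A u e" "u \<in> V" "\<forall>x\<in>A. tgt x \<in> V"
  shows "simple_path A V u (play_stack u e n)"
proof (induction n)
  case 0
  then show ?case using assms(2) by (simp add: simple_path_def verts_def)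
next
  case (Suc n)
  then show ?case
    unfolding play_stack_Suc using assms play_edge lastv_play_stack[OF assms(1)]
    by (metis simple_path_stack_step)
qed

lemma play_cycle_is_cycle:
  assumes "play A u e" "u \<in> V" "\<forall>x\<in>A. tgt x \<in> V" "finite V" "pops u e m"
  shows "walk (tgt (e m)) (play_cycle u e m)" "lastv (tgt (e m)) (play_cycle u e m) = tgt (e m)"
    "set (play_cycle u e m) \<subseteq> A" "length (play_cycle u e m) \<le> card V" "play_cycle u e m \<noteq> []"
  using popped_cycle_is_cycle[OF _ play_edge[OF assms(1)] _ _ assms(4)]
    play_stack_simple_path[OF assms(1-3), of m] lastv_play_stack[OF assms(1), of m] assms(5)
  unfolding pops_def play_cycle_def by metis+

lemma sum_play_eq_stack_plus_cycles:
  "(\<Sum>j<n. f (e j)) = sum_list (map f (play_stack u e n)) + (\<Sum>m<n. popped_sum f u e m)"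
proof (induction n)
  case (Suc n)
  have "(\<Sum>j<Suc n. f (e j))
      = (sum_list (map f (play_stack u e n)) + f (e n)) + (\<Sum>m<n. popped_sum f u e m)"
    using Suc by (simp add: add_ac)
  also have "sum_list (map f (play_stack u e n)) + f (e n)
      = sum_list (map f (play_stack u e (Suc n))) + popped_sum f u e n"
    using sum_list_stack_step[of f "play_stack u e n" "e n" u]
    by (simp add: play_stack_Suc popped_sum_def pops_def play_cycle_def)
  finally show ?case by (simp add: add_ac)
qed simp

section \<open>Lassos\<close>

definition lasso :: "(nat \<Rightarrow> 'v edge) \<Rightarrow> nat \<Rightarrow> 'v edge list \<Rightarrow> nat \<Rightarrow> 'v edge" where
  "lasso e m c n = (if n \<le> m then e n else c ! ((n - Suc m) mod length c))"

lemma cycle_tgt_nth: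
  assumes "walk y c" "lastv y c = y" "j < length c"
  shows "tgt (c ! j) = fst (c ! (Suc j mod length c))"
proof (cases "Suc j < length c")
  case True
  then show ?thesis using walk_nth_fst[OF assms(1) True] by (simp add: verts_def)
next
  case False
  then have "Suc j = length c" "j = length c - 1" using assms(3) by simp_all
  moreover have "fst (c ! 0) = y" using walk_nth_fst[OF assms(1), of 0] assms(3) by (force simp: verts_def)
  ultimately show ?thesis
    using assms(2) unfolding lastv_eq_last_verts
    by (auto simp: verts_def last_map last_conv_nth split: if_splits)
qed

lemma lasso_play:
  assumes "play A u e" "walk y c" "lastv y c = y" "c \<noteq> []" "tgt (e m) = y" "set c \<subseteq> A"
  shows "play A u (lasso e m c)"
  unfolding play_def
proof (intro conjI allI)
  fix n
  show "lasso e m c n \<in> A" using assms(1,4,6) by (auto simp: lasso_def play_def)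
  consider "n < m" | "n = m" | "n > m" by linarith
  then show "snd (snd (lasso e m c n)) = fst (lasso e m c (Suc n))"
  proof cases
    case 1
    then show ?thesis using assms(1) by (simp add: lasso_def play_def)
  next
    case 2
    then show ?thesis
      using assms(2,4,5) walk_nth_fst[of y c 0] by (simp add: lasso_def tgt_def verts_def)
  next
    case 3
    then have "Suc n - Suc m = Suc (n - Suc m)" by simp
    then show ?thesis
      using 3 cycle_tgt_nth[OF assms(2,3), of "(n - Suc m) mod length c"] assms(4)
      by (simp add: lasso_def tgt_def mod_Suc_eq)
  qed
qed (use assms(1) in \<open>simp add: lasso_def play_def\<close>)

lemma sum_lessThan_mod:
  fixes g :: "nat \<Rightarrow> 'a::comm_semiring_1"
  assumes "L > 0"
  shows "(\<Sum>k<n. g (k mod L)) = of_nat (n div L) * (\<Sum>k<L. g k) + (\<Sum>k<n mod L. g k)"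
proof (induction n)
  case (Suc n)
  show ?case
  proof (cases "Suc (n mod L) = L")
    case True
    then have "Suc n mod L = 0" "Suc n div L = Suc (n div L)"
      using mod_Suc[of n L] div_Suc[of n L] by simp_all
    moreover have "(\<Sum>k<L. g k) = (\<Sum>k<n mod L. g k) + g (n mod L)"
      using True by (metis sum.lessThan_Suc)
    ultimately show ?thesis using Suc by (simp add: algebra_simps)
  next
    case False
    then have "Suc n mod L = Suc (n mod L)" "Suc n div L = n div L"
      using mod_Suc[of n L] div_Suc[of n L] by simp_all
    then show ?thesis using Suc by (simp add: algebra_simps)
  qed
qed simp

lemma sum_lasso:
  fixes f :: "'v edge \<Rightarrow> int"
  assumes "m < n" "c \<noteq> []"
  shows "(\<Sum>j<n. f (lasso e m c j)) = (\<Sum>j<Suc m. f (e j))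
     + int ((n - Suc m) div length c) * sum_list (map f c) + (\<Sum>k<(n - Suc m) mod length c. f (c ! k))"
proof -
  have "{..<n} = {..<Suc m} \<union> {Suc m..<n}" using assms(1) by auto
  then have "(\<Sum>j<n. f (lasso e m c j))
      = (\<Sum>j<Suc m. f (lasso e m c j)) + (\<Sum>j\<in>{Suc m..<n}. f (lasso e m c j))"
    by (metis sum.union_disjoint finite_lessThan finite_atLeastLessThan ivl_disj_int(2))
  also have "(\<Sum>j<Suc m. f (lasso e m c j)) = (\<Sum>j<Suc m. f (e j))"
    by (rule sum.cong) (auto simp: lasso_def)
  also have "(\<Sum>j\<in>{Suc m..<n}. f (lasso e m c j)) = (\<Sum>k<n - Suc m. f (c ! (k mod length c)))"
    using assms(1) by (intro sum.reindex_bij_witness[of _ "\<lambda>k. k + Suc m" "\<lambda>j. j - Suc m"])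
      (auto simp: lasso_def)
  also have "\<dots> = int ((n - Suc m) div length c) * (\<Sum>k<length c. f (c ! k))
      + (\<Sum>k<(n - Suc m) mod length c. f (c ! k))"
    using sum_lessThan_mod[of "length c" "\<lambda>k. f (c ! k)"] assms(2) by simp
  finally show ?thesis by (simp add: sum_list_sum_nth atLeast0LessThan)
qed

lemma sum_lasso_linear:
  fixes f :: "'v edge \<Rightarrow> int"
  assumes "c \<noteq> []"
  defines "\<mu> \<equiv> real_of_int (sum_list (map f c)) / real (length c)"
  shows "\<exists>K. \<forall>n>m. \<bar>real_of_int (\<Sum>j<n. f (lasso e m c j)) - \<mu> * real n\<bar> \<le> K"
proof -
  define L where "L = length c"
  define S where "S = real_of_int (sum_list (map f c))"
  define R where "R = real_of_int (\<Sum>j<Suc m. f (e j))"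
  define B where "B = (\<Sum>k<L. \<bar>real_of_int (f (c ! k))\<bar>)"
  have L: "real L > 0" using assms(1) by (simp add: L_def)
  have \<mu>: "\<mu> = S / real L" by (simp add: \<mu>_def S_def L_def)
  have "\<bar>real_of_int (\<Sum>j<n. f (lasso e m c j)) - \<mu> * real n\<bar> \<le> \<bar>R\<bar> + B + (real m + 1 + real L) * \<bar>\<mu>\<bar>"
    if "m < n" for n
  proof -
    define q where "q = (n - Suc m) div L"
    define r where "r = (n - Suc m) mod L"
    have "n = Suc m + q * L + r"
      using that div_mult_mod_eq[of "n - Suc m" L] unfolding q_def r_def by linarith
    then have n: "real n = real (Suc m) + real q * real L + real r"
      by (metis of_nat_add of_nat_mult)
    have r: "real r \<le> real L" using L by (simp add: r_def)
    have sum: "real_of_int (\<Sum>j<n. f (lasso e m c j)) = R + real q * S + (\<Sum>k<r. real_of_int (f (c ! k)))"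
      using sum_lasso[OF that assms(1), of f e] by (simp add: R_def S_def q_def r_def L_def)
    have P: "\<bar>\<Sum>k<r. real_of_int (f (c ! k))\<bar> \<le> B"
      unfolding B_def using L r_def
      by (intro order_trans[OF sum_abs] sum_mono2) (auto simp: L_def)
    have "real q * S = \<mu> * real n - \<mu> * (real (Suc m) + real r)"
      using L by (simp add: \<mu> n field_simps)
    moreover have "\<bar>\<mu> * (real (Suc m) + real r)\<bar> \<le> (real m + 1 + real L) * \<bar>\<mu>\<bar>"
      using r by (simp add: abs_mult mult.commute mult_left_mono)
    ultimately show ?thesis using sum P by linarith
  qed
  then show ?thesis by blast
qed

section \<open>Mean payoffs\<close>

lemma liminf_avg_ge:
  fixes S :: "nat \<Rightarrow> real"
  assumes "eventually (\<lambda>n. c * real n - A \<le> S n) sequentially"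
  shows "ereal c \<le> liminf (\<lambda>n. ereal (S n / real (Suc n)))"
proof -
  have "(\<lambda>n. c - (A + c) / real (Suc n)) \<longlonglongrightarrow> c - 0"
    by (intro tendsto_diff tendsto_const LIMSEQ_Suc[OF lim_const_over_n])
  then have "liminf (\<lambda>n. ereal (c - (A + c) / real (Suc n))) = ereal c"
    by (intro lim_imp_Liminf) (auto intro: tendsto_ereal)
  moreover have "eventually (\<lambda>n. ereal (c - (A + c) / real (Suc n)) \<le> ereal (S n / real (Suc n))) sequentially"
    using assms
  proof eventually_elim
    case (elim n)
    have "c - (A + c) / real (Suc n) = (c * real n - A) / real (Suc n)"
      by (simp add: field_simps)
    also have "\<dots> \<le> S n / real (Suc n)"
      using elim by (simp add: divide_right_mono)
    finally show ?case by simp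
  qed
  ultimately show ?thesis using Liminf_mono by metis
qed

lemma limsup_avg_le:
  fixes S :: "nat \<Rightarrow> real"
  assumes "eventually (\<lambda>n. S n \<le> c * real n + A) sequentially"
  shows "limsup (\<lambda>n. ereal (S n / real (Suc n))) \<le> ereal c"
proof -
  have "eventually (\<lambda>n. (- c) * real n - A \<le> - S n) sequentially"
    using assms by eventually_elim simp
  from liminf_avg_ge[OF this]
  have "ereal (- c) \<le> liminf (\<lambda>n. - ereal (S n / real (Suc n)))"
    by simp
  then have "ereal (- c) \<le> - limsup (\<lambda>n. ereal (S n / real (Suc n)))"
    by (simp only: ereal_Liminf_uminus)
  then show ?thesis
    by (metis ereal_minus_le_minus uminus_ereal.simps(1))
qed

lemma avg_eq_sum_lessThan: "avg r e n = real_of_int (\<Sum>j<Suc n. r (fst (snd (e j)))) / real (Suc n)"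
  by (simp add: avg_def lessThan_Suc_atMost)

lemma lasso_mean_bounds:
  fixes r :: "(nat \<Rightarrow> int) \<Rightarrow> int"
  assumes "c \<noteq> []"
  defines "\<mu> \<equiv> real_of_int (sum_list (map (\<lambda>x. r (fst (snd x))) c)) / real (length c)"
  shows "ereal \<mu> \<le> liminf (\<lambda>n. ereal (avg r (lasso e m c) n))"
    "limsup (\<lambda>n. ereal (avg r (lasso e m c) n)) \<le> ereal \<mu>"
proof -
  obtain K where K: "\<forall>n>m. \<bar>real_of_int (\<Sum>j<n. r (fst (snd (lasso e m c j)))) - \<mu> * real n\<bar> \<le> K"
    using sum_lasso_linear[OF assms(1), where f = "\<lambda>x. r (fst (snd x))" and m = m and e = e] unfolding \<mu>_def by blast
  then have "eventually (\<lambda>n. \<bar>real_of_int (\<Sum>j<Suc n. r (fst (snd (lasso e m c j)))) - \<mu> * real (Suc n)\<bar> \<le> K) sequentially"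
    unfolding eventually_sequentially by (metis le_imp_less_Suc)
  then have lower: "eventually (\<lambda>n. \<mu> * real n - (K + \<bar>\<mu>\<bar>)
      \<le> real_of_int (\<Sum>j<Suc n. r (fst (snd (lasso e m c j))))) sequentially"
    and upper: "eventually (\<lambda>n. real_of_int (\<Sum>j<Suc n. r (fst (snd (lasso e m c j))))
      \<le> \<mu> * real n + (K + \<bar>\<mu>\<bar>)) sequentially"
    by (auto elim!: eventually_mono simp: algebra_simps abs_le_iff)
  show "ereal \<mu> \<le> liminf (\<lambda>n. ereal (avg r (lasso e m c) n))"
    unfolding avg_eq_sum_lessThan using lower by (rule liminf_avg_ge)
  show "limsup (\<lambda>n. ereal (avg r (lasso e m c) n)) \<le> ereal \<mu>"
    unfolding avg_eq_sum_lessThan using upper by (rule limsup_avg_le)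
qed

section \<open>Scalarisation of weight vectors\<close>

definition scal_max :: "nat \<Rightarrow> nat \<Rightarrow> 'v edge set \<Rightarrow> nat \<Rightarrow> int" where
  "scal_max k n E d = Max {\<bar>scal k n E d w\<bar> | w. \<exists>a b. (a, w, b) \<in> E}"

lemma scal_Suc_scal_max:
  "scal (Suc k) n E d w = w (d - Suc k) * (int n * scal_max k n E d + 1) + scal k n E d w"
  by (simp add: scal_max_def)

lemma abs_scal_le_scal_max:
  assumes "finite E" "x \<in> E"
  shows "\<bar>scal k n E d (fst (snd x))\<bar> \<le> scal_max k n E d"
proof -
  have "{\<bar>scal k n E d w\<bar> | w. \<exists>a b. (a, w, b) \<in> E} = (\<lambda>x. \<bar>scal k n E d (fst (snd x))\<bar>) ` E"
    by force
  with assms show ?thesis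
    unfolding scal_max_def by (metis (no_types, lifting) Max_ge finite_imageI image_eqI)
qed

lemma abs_sum_list_le:
  fixes f :: "'a \<Rightarrow> int"
  assumes "\<forall>x\<in>set c. \<bar>f x\<bar> \<le> M"
  shows "\<bar>sum_list (map f c)\<bar> \<le> int (length c) * M"
  using assms by (induction c) (auto simp: algebra_simps)

definition weight_sum :: "'v edge list \<Rightarrow> nat \<Rightarrow> int" where
  "weight_sum c l = sum_list (map (\<lambda>x. fst (snd x) l) c)"

definition scal_sum :: "nat \<Rightarrow> nat \<Rightarrow> 'v edge set \<Rightarrow> nat \<Rightarrow> 'v edge list \<Rightarrow> int" where
  "scal_sum k n E d c = sum_list (map (\<lambda>x. scal k n E d (fst (snd x))) c)"

fun lex_sgn :: "nat \<Rightarrow> nat \<Rightarrow> (nat \<Rightarrow> int) \<Rightarrow> int" where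
  "lex_sgn d 0 x = sgn (x d)"
| "lex_sgn d (Suc k) x = (if x (d - Suc k) \<noteq> 0 then sgn (x (d - Suc k)) else lex_sgn d k x)"

text \<open>
  The factor \<open>n \<cdot> scal_max k + 1\<close> makes the coordinate \<open>d - Suc k\<close> dominate the scalarised sum
  of the remaining coordinates over any list of at most \<open>n\<close> edges.\<close>

lemma sgn_scal_sum:
  assumes "finite E" "E \<noteq> {}" "set c \<subseteq> E" "length c \<le> n"
  shows "sgn (scal_sum k n E d c) = lex_sgn d k (weight_sum c)"
proof (induction k)
  case 0
  then show ?case by (simp add: scal_sum_def weight_sum_def)
next
  case (Suc k)
  let ?M = "scal_max k n E d" and ?a = "weight_sum c (d - Suc k)" and ?T = "scal_sum k n E d c"
  have T: "scal_sum (Suc k) n E d c = ?a * (int n * ?M + 1) + ?T"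
    unfolding scal_sum_def weight_sum_def scal_Suc_scal_max
    by (simp add: sum_list_addf flip: sum_list_mult_const)
  have "?M \<ge> 0"
    using assms(1,2) abs_scal_le_scal_max by (metis abs_ge_zero all_not_in_conv order_trans)
  moreover have "\<bar>?T\<bar> \<le> int (length c) * ?M"
    unfolding scal_sum_def using assms(1,3) by (intro abs_sum_list_le) (auto intro: abs_scal_le_scal_max)
  ultimately have bound: "\<bar>?T\<bar> < int n * ?M + 1"
    using assms(4) by (smt (verit) mult_right_mono of_nat_mono)
  then have pos: "0 \<le> int n * ?M + 1" by linarith
  consider "?a = 0" | "?a \<ge> 1" | "?a \<le> -1" by linarith
  then show ?case
  proof cases
    case 2
    then have "?a * (int n * ?M + 1) \<ge> int n * ?M + 1"
      using mult_right_mono[OF 2 pos] by simp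
    then have "scal_sum (Suc k) n E d c > 0" using T bound by linarith
    then show ?thesis using 2 by simp
  next
    case 3
    then have "?a * (int n * ?M + 1) \<le> - (int n * ?M + 1)"
      using mult_right_mono[OF 3 pos] by simp
    then have "scal_sum (Suc k) n E d c < 0" using T bound by linarith
    then show ?thesis using 3 by simp
  qed (use Suc T in simp)
qed

definition lex_neg :: "nat \<Rightarrow> (nat \<Rightarrow> int) \<Rightarrow> bool" where
  "lex_neg d x \<longleftrightarrow> (\<exists>l\<in>{1..d}. x l < 0 \<and> (\<forall>l'\<in>{1..<l}. x l' = 0))"

lemma lex_sgn_neg_iff:
  "k < d \<Longrightarrow> lex_sgn d k x < 0 \<longleftrightarrow> (\<exists>l\<in>{d - k..d}. x l < 0 \<and> (\<forall>l'\<in>{d - k..<l}. x l' = 0))"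
proof (induction k)
  case 0
  then show ?case by (auto simp: sgn_if)
next
  case (Suc k)
  let ?i = "d - Suc k"
  have i: "d - k = Suc ?i" "?i \<le> d" using Suc.prems by auto
  have split: "(\<exists>l\<in>{?i..d}. P l) \<longleftrightarrow> P ?i \<or> (\<exists>l\<in>{Suc ?i..d}. P l)" for P
    using i(2) by (metis Suc_le_eq atLeastAtMost_iff le_eq_less_or_eq)
  have zeros: "(\<forall>l'\<in>{?i..<l}. x l' = 0) \<longleftrightarrow> x ?i = 0 \<and> (\<forall>l'\<in>{Suc ?i..<l}. x l' = 0)" if "?i < l" for l
    using that by (auto simp: Suc_le_eq)
  show ?case
    using Suc i
    by (auto simp: split zeros sgn_if Suc_le_eq)
qed

lemma scal_sum_neg_iff_lex_neg:
  assumes "finite E" "E \<noteq> {}" "set c \<subseteq> E" "length c \<le> n" "d \<ge> 1"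
  shows "scal_sum (d - 1) n E d c < 0 \<longleftrightarrow> lex_neg d (weight_sum c)"
proof -
  have "scal_sum (d - 1) n E d c < 0 \<longleftrightarrow> lex_sgn d (d - 1) (weight_sum c) < 0"
    using sgn_scal_sum[OF assms(1-4)] by (metis sgn_less)
  also have "\<dots> \<longleftrightarrow> lex_neg d (weight_sum c)"
    using lex_sgn_neg_iff[of "d - 1" d] assms(5) by (simp add: lex_neg_def)
  finally show ?thesis .
qed

section \<open>Lexicographic energy from cycle sums\<close>

lemma sum_atMost_ge_card:
  fixes a :: "nat \<Rightarrow> int"
  assumes "\<forall>m\<ge>N. a m \<ge> 0" "F \<subseteq> {m. N \<le> m \<and> m \<le> n \<and> a m > 0}"
  shows "int (card F) - (\<Sum>m<N. \<bar>a m\<bar>) \<le> (\<Sum>m\<le>n. a m)"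
proof -
  let ?A = "{..n} \<inter> {..<N}" and ?B = "{..n} - {..<N}"
  have fin: "finite F" using assms(2) finite_subset[of F "{..n}"] by auto
  have "(\<Sum>m\<in>?A. \<bar>a m\<bar>) \<le> (\<Sum>m<N. \<bar>a m\<bar>)" by (intro sum_mono2) auto
  then have "- (\<Sum>m<N. \<bar>a m\<bar>) \<le> (\<Sum>m\<in>?A. - \<bar>a m\<bar>)" by (simp add: sum_negf)
  also have "\<dots> \<le> (\<Sum>m\<in>?A. a m)" by (intro sum_mono) simp
  finally have A: "- (\<Sum>m<N. \<bar>a m\<bar>) \<le> (\<Sum>m\<in>?A. a m)" .
  have "int (card F) = (\<Sum>m\<in>F. 1)" by simp
  also have "\<dots> \<le> (\<Sum>m\<in>F. a m)" using assms(2) by (intro sum_mono) auto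
  also have "\<dots> \<le> (\<Sum>m\<in>?B. a m)" using assms by (intro sum_mono2) auto
  finally have B: "int (card F) \<le> (\<Sum>m\<in>?B. a m)" .
  have "(\<Sum>m\<le>n. a m) = (\<Sum>m\<in>?A. a m) + (\<Sum>m\<in>?B. a m)"
    by (metis finite_atMost sum.Int_Diff)
  with A B show ?thesis by linarith
qed

lemma sum_atMost_tendsto_top:
  fixes a :: "nat \<Rightarrow> int"
  assumes "\<forall>m\<ge>N. a m \<ge> 0" "infinite {m. N \<le> m \<and> a m > 0}"
  shows "eventually (\<lambda>n. R \<le> (\<Sum>m\<le>n. a m)) sequentially"
proof -
  obtain F where F: "finite F" "card F = nat (R + (\<Sum>m<N. \<bar>a m\<bar>))" "F \<subseteq> {m. N \<le> m \<and> a m > 0}"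
    using infinite_arbitrarily_large[OF assms(2)] by blast
  then obtain n0 where "\<forall>m\<in>F. m \<le> n0" using finite_nat_set_iff_bounded_le by blast
  then have "eventually (\<lambda>n. F \<subseteq> {m. N \<le> m \<and> m \<le> n \<and> a m > 0}) sequentially"
    using F(3) unfolding eventually_sequentially by (intro exI[of _ n0]) auto
  then show ?thesis
  proof eventually_elim
    case (elim n)
    with sum_atMost_ge_card[OF assms(1) this] F(2) show ?case by linarith
  qed
qed

lemma liminf_eq_PInfty_if_sums_tendsto_top:
  fixes a :: "nat \<Rightarrow> int" and X :: "nat \<Rightarrow> int"
  assumes "\<forall>m\<ge>N. a m \<ge> 0" "infinite {m. N \<le> m \<and> a m > 0}" "\<forall>n. \<bar>X n - (\<Sum>m\<le>n. a m)\<bar> \<le> K"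
  shows "liminf (\<lambda>n. ereal (real_of_int (X n))) = \<infinity>"
proof (rule ereal_top)
  fix B :: real
  have "eventually (\<lambda>n. \<lceil>B\<rceil> + K \<le> (\<Sum>m\<le>n. a m)) sequentially"
    by (rule sum_atMost_tendsto_top[OF assms(1,2)])
  then have "eventually (\<lambda>n. ereal B \<le> ereal (real_of_int (X n))) sequentially"
  proof eventually_elim
    case (elim n)
    then have "\<lceil>B\<rceil> \<le> X n" using assms(3)[rule_format, of n] by linarith
    then show ?case by (simp add: ceiling_le_iff)
  qed
  then show "ereal B \<le> liminf (\<lambda>n. ereal (real_of_int (X n)))" by (rule Liminf_bounded)
qed

lemma limsup_neq_MInfty_if_sums_nonneg:
  fixes a :: "nat \<Rightarrow> int" and X :: "nat \<Rightarrow> int"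
  assumes "\<forall>m\<ge>N. a m \<ge> 0" "\<forall>n. \<bar>X n - (\<Sum>m\<le>n. a m)\<bar> \<le> K"
  shows "limsup (\<lambda>n. ereal (real_of_int (X n))) \<noteq> -\<infinity>"
proof -
  have "- (\<Sum>m<N. \<bar>a m\<bar>) - K \<le> X n" for n
    using sum_atMost_ge_card[OF assms(1), of "{}" n] assms(2)[rule_format, of n] by simp
  then have "ereal (real_of_int (- (\<Sum>m<N. \<bar>a m\<bar>) - K)) \<le> liminf (\<lambda>n. ereal (real_of_int (X n)))"
    by (intro Liminf_bounded always_eventually allI) (simp only: ereal_less_eq(3) of_int_le_iff)
  also have "\<dots> \<le> limsup (\<lambda>n. ereal (real_of_int (X n)))"
    by (rule Liminf_le_Limsup) simp
  finally show ?thesis by auto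
qed

lemma limsup_eq_MInfty_if_sums_tendsto_bot:
  fixes a :: "nat \<Rightarrow> int" and X :: "nat \<Rightarrow> int"
  assumes "\<forall>m\<ge>N. a m \<le> 0" "infinite {m. N \<le> m \<and> a m < 0}" "\<forall>n. \<bar>X n - (\<Sum>m\<le>n. a m)\<bar> \<le> K"
  shows "limsup (\<lambda>n. ereal (real_of_int (X n))) = -\<infinity>"
proof -
  have "liminf (\<lambda>n. ereal (real_of_int (- X n))) = \<infinity>"
    using assms by (intro liminf_eq_PInfty_if_sums_tendsto_top[where a = "\<lambda>m. - a m" and N = N and K = K])
      (auto simp: sum_negf abs_minus_commute)
  then show ?thesis
    using ereal_Liminf_uminus[of sequentially "\<lambda>n. ereal (real_of_int (X n))"]
    by simp (metis ereal_uminus_uminus)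
qed

lemma liminf_less_PInfty_if_sums_nonpos:
  fixes a :: "nat \<Rightarrow> int" and X :: "nat \<Rightarrow> int"
  assumes "\<forall>m\<ge>N. a m \<le> 0" "\<forall>n. \<bar>X n - (\<Sum>m\<le>n. a m)\<bar> \<le> K"
  shows "liminf (\<lambda>n. ereal (real_of_int (X n))) < \<infinity>"
proof -
  have "limsup (\<lambda>n. ereal (real_of_int (- X n))) \<noteq> -\<infinity>"
    using assms by (intro limsup_neq_MInfty_if_sums_nonneg[where a = "\<lambda>m. - a m" and N = N and K = K])
      (auto simp: sum_negf abs_minus_commute)
  then show ?thesis
    using ereal_Limsup_uminus[of sequentially "\<lambda>n. ereal (real_of_int (X n))"]
    by (simp add: less_top)
qed

definition lex_falls :: "nat \<Rightarrow> (nat \<Rightarrow> nat \<Rightarrow> int) \<Rightarrow> bool" where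
  "lex_falls d X \<longleftrightarrow> (\<exists>k\<in>{1..d}. limsup (\<lambda>n. ereal (real_of_int (X k n))) = -\<infinity> \<and>
      (\<forall>l\<in>{1..<k}. liminf (\<lambda>n. ereal (real_of_int (X l n))) < \<infinity>))"

lemma lex_win2_iff_lex_falls:
  "lex_win2 d e \<longleftrightarrow> lex_falls d (\<lambda>l n. \<Sum>j\<le>n. fst (snd (e j)) l)"
  by (simp add: lex_win2_def lex_falls_def psum_def[abs_def])

lemma not_lex_neg_nonneg:
  "\<not> lex_neg d x \<Longrightarrow> l \<in> {1..d} \<Longrightarrow> \<forall>l'\<in>{1..<l}. x l' = 0 \<Longrightarrow> 0 \<le> x l"
  unfolding lex_neg_def by (meson not_le)

lemma eventually_zero_below_if_not_lex_neg:
  fixes X C :: "nat \<Rightarrow> nat \<Rightarrow> int"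
  assumes nonneg: "\<forall>m. \<not> lex_neg d (C m)"
    and close: "\<forall>l\<in>{1..d}. \<exists>K. \<forall>n. \<bar>X l n - (\<Sum>m\<le>n. C m l)\<bar> \<le> K"
    and "k \<le> d" and "\<forall>l\<in>{1..<k}. liminf (\<lambda>n. ereal (real_of_int (X l n))) < \<infinity>"
  shows "\<exists>N. \<forall>m\<ge>N. \<forall>l\<in>{1..<k}. C m l = 0"
  using assms(3,4)
proof (induction k)
  case (Suc k)
  then obtain N where N: "\<forall>m\<ge>N. \<forall>l\<in>{1..<k}. C m l = 0" by auto
  show ?case
  proof (cases "k = 0")
    case False
    then have k: "k \<in> {1..d}" "k \<in> {1..<Suc k}" using Suc.prems(1) by auto
    have ge: "\<forall>m\<ge>N. C m k \<ge> 0" using N not_lex_neg_nonneg[OF nonneg[rule_format] k(1)] by blast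
    obtain K where K: "\<forall>n. \<bar>X k n - (\<Sum>m\<le>n. C m k)\<bar> \<le> K" using close k(1) by blast
    have "finite {m. N \<le> m \<and> C m k > 0}"
    proof (rule ccontr)
      assume "infinite {m. N \<le> m \<and> C m k > 0}"
      from liminf_eq_PInfty_if_sums_tendsto_top[OF ge this K] Suc.prems(2) k(2) show False by simp
    qed
    then obtain B where B: "\<And>m. N \<le> m \<Longrightarrow> C m k > 0 \<Longrightarrow> m < B"
      by (auto simp: finite_nat_set_iff_bounded)
    have "C m l = 0" if "max N B \<le> m" "l \<in> {1..<Suc k}" for m l
    proof (cases "l = k")
      case True
      with B[of m] ge that(1) show ?thesis by fastforce
    next
      case False
      with N that show ?thesis by auto
    qed
    then show ?thesis by blast
  qed simp
qed simp

lemma not_lex_falls_if_not_lex_neg: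
  fixes X C :: "nat \<Rightarrow> nat \<Rightarrow> int"
  assumes nonneg: "\<forall>m. \<not> lex_neg d (C m)"
    and close: "\<forall>l\<in>{1..d}. \<exists>K. \<forall>n. \<bar>X l n - (\<Sum>m\<le>n. C m l)\<bar> \<le> K"
  shows "\<not> lex_falls d X"
proof
  assume "lex_falls d X"
  then obtain k where k: "k \<in> {1..d}" "limsup (\<lambda>n. ereal (real_of_int (X k n))) = -\<infinity>"
    "\<forall>l\<in>{1..<k}. liminf (\<lambda>n. ereal (real_of_int (X l n))) < \<infinity>"
    unfolding lex_falls_def by blast
  obtain N where "\<forall>m\<ge>N. \<forall>l\<in>{1..<k}. C m l = 0"
    using eventually_zero_below_if_not_lex_neg[OF nonneg close _ k(3)] k(1) by auto
  then have "\<forall>m\<ge>N. C m k \<ge> 0"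
    using not_lex_neg_nonneg[OF nonneg[rule_format] k(1)] by blast
  moreover obtain K where "\<forall>n. \<bar>X k n - (\<Sum>m\<le>n. C m k)\<bar> \<le> K" using close k(1) by blast
  ultimately show False using limsup_neq_MInfty_if_sums_nonneg[of N "\<lambda>m. C m k" "X k"] k(2) by blast
qed

text \<open>Among the indices of the first nonzero coordinates of the vectors \<open>C m\<close>, \<open>m \<in> P\<close>, take
  the least one that occurs infinitely often.\<close>

lemma lex_neg_infinitely_often:
  fixes C :: "nat \<Rightarrow> nat \<Rightarrow> int"
  assumes neg: "\<forall>m\<in>P. lex_neg d (C m)" and zero: "\<forall>m. m \<notin> P \<longrightarrow> (\<forall>l. C m l = 0)"
    and inf: "infinite P"
  obtains k N where "k \<in> {1..d}" "\<forall>m\<ge>N. \<forall>l\<in>{1..<k}. C m l = 0" "\<forall>m\<ge>N. C m k \<le> 0"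
    "infinite {m. N \<le> m \<and> C m k < 0}"
proof -
  define lead where "lead m = (SOME l. l \<in> {1..d} \<and> C m l < 0 \<and> (\<forall>l'\<in>{1..<l}. C m l' = 0))" for m
  have lead: "lead m \<in> {1..d}" "C m (lead m) < 0" "\<forall>l'\<in>{1..<lead m}. C m l' = 0" if "m \<in> P" for m
    using someI_ex[OF neg[rule_format, OF that, unfolded lex_neg_def Bex_def]]
    unfolding lead_def by blast+
  define Inf where "Inf = {l\<in>{1..d}. infinite {m\<in>P. lead m = l}}"
  have fin: "finite Inf" by (simp add: Inf_def)
  have "Inf \<noteq> {}"
  proof
    assume "Inf = {}"
    then have "finite (\<Union>l\<in>{1..d}. {m\<in>P. lead m = l})" by (auto simp: Inf_def)
    moreover have "P \<subseteq> (\<Union>l\<in>{1..d}. {m\<in>P. lead m = l})" using lead(1) by blast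
    ultimately show False using inf finite_subset by blast
  qed
  define k where "k = Min Inf"
  have k: "k \<in> {1..d}" "infinite {m\<in>P. lead m = k}"
    using Min_in[OF fin \<open>Inf \<noteq> {}\<close>] unfolding k_def Inf_def by auto
  have "finite {m\<in>P. lead m = l}" if "l \<in> {1..<k}" for l
  proof (rule ccontr)
    assume "infinite {m\<in>P. lead m = l}"
    then have "l \<in> Inf" using that k(1) by (auto simp: Inf_def)
    then show False using Min_le[OF fin] that unfolding k_def by fastforce
  qed
  then have "finite (\<Union>l\<in>{1..<k}. {m\<in>P. lead m = l})" by blast
  then obtain N where N: "\<forall>m\<in>(\<Union>l\<in>{1..<k}. {m\<in>P. lead m = l}). m < N"
    by (meson finite_nat_set_iff_bounded)
  have lead_ge: "k \<le> lead m" if "m \<in> P" "N \<le> m" for m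
  proof (rule ccontr)
    assume "\<not> k \<le> lead m"
    then have "lead m \<in> {1..<k}" using lead(1)[OF that(1)] by auto
    then show False using N that by fastforce
  qed
  have "\<forall>m\<ge>N. \<forall>l\<in>{1..<k}. C m l = 0"
    using lead(3) lead_ge zero by (metis atLeastLessThan_iff order.strict_trans2)
  moreover have "C m k \<le> 0" if Nm: "N \<le> m" for m
  proof (cases "m \<in> P")
    case True
    then consider "lead m = k" | "k \<in> {1..<lead m}" using lead_ge[OF True Nm] k(1) by force
    then show ?thesis using lead[OF True] by cases auto
  qed (use zero in auto)
  moreover have "{m\<in>P. lead m = k} - {..<N} \<subseteq> {m. N \<le> m \<and> C m k < 0}" using lead(2) by auto
  then have "infinite {m. N \<le> m \<and> C m k < 0}"
    using k(2) finite_subset by (metis finite_Diff2 finite_lessThan)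
  ultimately show ?thesis using that k(1) by blast
qed

lemma lex_falls_if_lex_neg:
  fixes X C :: "nat \<Rightarrow> nat \<Rightarrow> int"
  assumes "\<forall>m\<in>P. lex_neg d (C m)" "\<forall>m. m \<notin> P \<longrightarrow> (\<forall>l. C m l = 0)" "infinite P"
    and close: "\<forall>l\<in>{1..d}. \<exists>K. \<forall>n. \<bar>X l n - (\<Sum>m\<le>n. C m l)\<bar> \<le> K"
  shows "lex_falls d X"
proof -
  obtain k N where k: "k \<in> {1..d}" and zero: "\<forall>m\<ge>N. \<forall>l\<in>{1..<k}. C m l = 0"
    and nonpos: "\<forall>m\<ge>N. C m k \<le> 0" and inf: "infinite {m. N \<le> m \<and> C m k < 0}"
    using lex_neg_infinitely_often[OF assms(1-3)] .
  have "limsup (\<lambda>n. ereal (real_of_int (X k n))) = -\<infinity>"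
    using limsup_eq_MInfty_if_sums_tendsto_bot[of N "\<lambda>m. C m k" "X k"] nonpos inf close k by blast
  moreover have "liminf (\<lambda>n. ereal (real_of_int (X l n))) < \<infinity>" if l: "l \<in> {1..<k}" for l
  proof -
    obtain K where "\<forall>n. \<bar>X l n - (\<Sum>m\<le>n. C m l)\<bar> \<le> K" using close l k by force
    then show ?thesis
      using liminf_less_PInfty_if_sums_nonpos[of N "\<lambda>m. C m l" "X l"] zero l by simp
  qed
  ultimately show ?thesis using k unfolding lex_falls_def by blast
qed

section \<open>Cycle decomposition of plays\<close>

lemma abs_sum_play_minus_cycles_le:
  fixes f :: "'v edge \<Rightarrow> int"
  assumes "play A u e" "u \<in> V" "\<forall>x\<in>A. tgt x \<in> V" "finite V" "\<forall>x\<in>A. \<bar>f x\<bar> \<le> M"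
  shows "\<bar>(\<Sum>j<n. f (e j)) - (\<Sum>m<n. popped_sum f u e m)\<bar> \<le> int (card V) * M"
proof -
  let ?s = "play_stack u e n"
  have "simple_path A V u ?s" using play_stack_simple_path[OF assms(1-3)] .
  then have "set ?s \<subseteq> A" "length ?s < card V"
    using simple_path_length[OF _ assms(4)] by (auto simp: simple_path_def)
  moreover have "M \<ge> 0" using assms(5) play_edge[OF assms(1), of 0] by fastforce
  ultimately have "\<bar>sum_list (map f ?s)\<bar> \<le> int (card V) * M"
    using assms(5) abs_sum_list_le[of ?s f M] by (smt (verit) mult_right_mono of_nat_less_iff subsetD)
  then show ?thesis using sum_play_eq_stack_plus_cycles[of f e n u] by simp
qed

lemma pops_infinite:
  assumes "play A u e" "u \<in> V" "\<forall>x\<in>A. tgt x \<in> V" "finite V"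
  shows "infinite {m. pops u e m}"
proof
  assume "finite {m. pops u e m}"
  then obtain B where B: "\<And>m. pops u e m \<Longrightarrow> m < B" by (auto simp: finite_nat_set_iff_bounded)
  define n where "n = Suc B + card V + nat (\<Sum>m<B. popped_sum (\<lambda>_. 1::int) u e m)"
  have "(\<Sum>m<n. popped_sum (\<lambda>_. 1::int) u e m) = (\<Sum>m<B. popped_sum (\<lambda>_. 1::int) u e m)"
    using B by (intro sum.mono_neutral_right) (auto simp: n_def popped_sum_def dest: B)
  moreover have "\<bar>int n - (\<Sum>m<n. popped_sum (\<lambda>_. 1::int) u e m)\<bar> \<le> int (card V)"
    using abs_sum_play_minus_cycles_le[OF assms, of "\<lambda>_. 1" 1 n] by simp
  moreover have "0 \<le> (\<Sum>m<B. popped_sum (\<lambda>_. 1::int) u e m)"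
    by (intro sum_nonneg) (simp add: popped_sum_def sum_list_triv)
  ultimately show False unfolding n_def by linarith
qed

lemma energy_close_to_cycle_sums:
  assumes "play A u e" "u \<in> V" "\<forall>x\<in>A. tgt x \<in> V" "finite V" "finite A"
  shows "\<exists>K. \<forall>n. \<bar>(\<Sum>j\<le>n. fst (snd (e j)) l) - (\<Sum>m\<le>n. popped_sum (\<lambda>x. fst (snd x) l) u e m)\<bar> \<le> K"
proof -
  have "\<forall>x\<in>A. \<bar>fst (snd x) l\<bar> \<le> (\<Sum>y\<in>A. \<bar>fst (snd y) l\<bar>)"
    using assms(5) by (auto intro: member_le_sum)
  from abs_sum_play_minus_cycles_le[OF assms(1-4) this]
  show ?thesis by (metis lessThan_Suc_atMost)
qed

lemma sum_play_ge_if_cycles_nonneg: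
  fixes f :: "'v edge \<Rightarrow> int"
  assumes "play A u e" "u \<in> V" "\<forall>x\<in>A. tgt x \<in> V" "finite V" "\<forall>x\<in>A. \<bar>f x\<bar> \<le> M"
    and "\<forall>m. pops u e m \<longrightarrow> 0 \<le> sum_list (map f (play_cycle u e m))"
  shows "- (int (card V) * M) \<le> (\<Sum>j<n. f (e j))"
proof -
  have "0 \<le> (\<Sum>m<n. popped_sum f u e m)"
    using assms(6) by (intro sum_nonneg) (simp add: popped_sum_def)
  then show ?thesis using abs_sum_play_minus_cycles_le[OF assms(1-5), of n] by linarith
qed

text \<open>A negative cycle costs at least \<open>1\<close> and has at most \<open>card V\<close> edges.\<close>

lemma sum_play_le_if_cycles_neg:
  fixes f :: "'v edge \<Rightarrow> int"
  assumes "play A u e" "u \<in> V" "\<forall>x\<in>A. tgt x \<in> V" "finite V" "\<forall>x\<in>A. \<bar>f x\<bar> \<le> M"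
    and "\<forall>m. pops u e m \<longrightarrow> sum_list (map f (play_cycle u e m)) < 0"
  shows "int (card V) * (\<Sum>j<n. f (e j)) \<le> int (card V) * (int (card V) * M) + int (card V) - int n"
proof -
  let ?N = "card V"
  let ?P = "\<Sum>m<n. popped_sum f u e m" and ?Q = "\<Sum>m<n. popped_sum (\<lambda>_. 1) u e m"
  have cycle_bound: "int ?N * popped_sum f u e m \<le> - popped_sum (\<lambda>_. 1) u e m" for m
  proof (cases "pops u e m")
    case True
    then have "sum_list (map f (play_cycle u e m)) \<le> -1" "length (play_cycle u e m) \<le> ?N"
      using assms(6) play_cycle_is_cycle(4)[OF assms(1-4) True] by force+
    then have "int ?N * sum_list (map f (play_cycle u e m)) \<le> - int (length (play_cycle u e m))"
      using mult_left_mono[of _ "-1" "int ?N"] by fastforce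
    then show ?thesis using True by (simp add: popped_sum_def sum_list_triv)
  qed (simp add: popped_sum_def)
  have "(\<Sum>j<n. f (e j)) \<le> int ?N * M + ?P"
    using abs_sum_play_minus_cycles_le[OF assms(1-5), of n] by linarith
  then have "int ?N * (\<Sum>j<n. f (e j)) \<le> int ?N * (int ?N * M) + int ?N * ?P"
    by (metis distrib_left mult_left_mono of_nat_0_le_iff)
  moreover have "int ?N * ?P = (\<Sum>m<n. int ?N * popped_sum f u e m)"
    by (simp add: sum_distrib_left)
  moreover have "\<dots> \<le> (\<Sum>m<n. - popped_sum (\<lambda>_. 1) u e m)"
    by (intro sum_mono cycle_bound)
  moreover have "int n - int ?N \<le> ?Q"
    using abs_sum_play_minus_cycles_le[OF assms(1-4), of "\<lambda>_. 1" 1 n] by simp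
  ultimately show ?thesis by (simp add: sum_negf)
qed

lemma popped_sum_coordinate:
  "(\<lambda>l. popped_sum (\<lambda>x. fst (snd x) l) u e m) = (if pops u e m then weight_sum (play_cycle u e m) else (\<lambda>_. 0))"
  by (auto simp: popped_sum_def weight_sum_def)

text \<open>A cycle popped along a play closes a lasso whose mean payoff is the mean weight of the cycle.\<close>

lemma sum_play_cycle_nonneg_if_liminf_nonneg:
  fixes r :: "(nat \<Rightarrow> int) \<Rightarrow> int"
  assumes "\<forall>e'. play A u e' \<longrightarrow> 0 \<le> liminf (\<lambda>n. ereal (avg r e' n))"
    and "play A u e" "u \<in> V" "\<forall>x\<in>A. tgt x \<in> V" "finite V" "pops u e m"
  shows "0 \<le> sum_list (map (\<lambda>x. r (fst (snd x))) (play_cycle u e m))"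
proof -
  let ?c = "play_cycle u e m"
  note cycle = play_cycle_is_cycle[OF assms(2-6)]
  have "play A u (lasso e m ?c)" using lasso_play[OF assms(2) cycle(1,2,5) refl cycle(3)] .
  then have "0 \<le> liminf (\<lambda>n. ereal (avg r (lasso e m ?c) n))" using assms(1) by blast
  also have "\<dots> \<le> limsup (\<lambda>n. ereal (avg r (lasso e m ?c) n))" by (rule Liminf_le_Limsup) simp
  also have "\<dots> \<le> ereal (real_of_int (sum_list (map (\<lambda>x. r (fst (snd x))) ?c)) / real (length ?c))"
    by (rule lasso_mean_bounds(2)[OF cycle(5)])
  finally show ?thesis using cycle(5) by (simp add: zero_le_divide_iff)
qed

lemma sum_play_cycle_neg_if_limsup_neg:
  fixes r :: "(nat \<Rightarrow> int) \<Rightarrow> int"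
  assumes "\<forall>e'. play A u e' \<longrightarrow> limsup (\<lambda>n. ereal (avg r e' n)) < 0"
    and "play A u e" "u \<in> V" "\<forall>x\<in>A. tgt x \<in> V" "finite V" "pops u e m"
  shows "sum_list (map (\<lambda>x. r (fst (snd x))) (play_cycle u e m)) < 0"
proof -
  let ?c = "play_cycle u e m"
  note cycle = play_cycle_is_cycle[OF assms(2-6)]
  have "play A u (lasso e m ?c)" using lasso_play[OF assms(2) cycle(1,2,5) refl cycle(3)] .
  have "ereal (real_of_int (sum_list (map (\<lambda>x. r (fst (snd x))) ?c)) / real (length ?c))
      \<le> liminf (\<lambda>n. ereal (avg r (lasso e m ?c) n))"
    by (rule lasso_mean_bounds(1)[OF cycle(5)])
  also have "\<dots> \<le> limsup (\<lambda>n. ereal (avg r (lasso e m ?c) n))" by (rule Liminf_le_Limsup) simp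
  also have "\<dots> < 0" using assms(1) \<open>play A u (lasso e m ?c)\<close> by blast
  finally show ?thesis using cycle(5) by (simp add: divide_less_0_iff)
qed

section \<open>The first-cycle game\<close>

text \<open>
  Positions are stacks.  The player owning \<open>P\<close> wins as soon as a popped cycle satisfies \<open>G\<close>
  and loses as soon as one violates it; stacks are simple paths, so every play of this game is
  decided after fewer than \<open>card V\<close> moves.\<close>

inductive cycle_game_win :: "'v edge set \<Rightarrow> 'v set \<Rightarrow> ('v edge list \<Rightarrow> bool) \<Rightarrow> 'v \<Rightarrow> 'v edge list \<Rightarrow> bool"
  for E P G u where
  own: "lastv u s \<in> P \<Longrightarrow> x \<in> E \<Longrightarrow> fst x = lastv u s \<Longrightarrow>
    closes_cycle u s x \<and> G (popped_cycle u s x)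
      \<or> \<not> closes_cycle u s x \<and> cycle_game_win E P G u (s @ [x]) \<Longrightarrow>
    cycle_game_win E P G u s"
| other: "lastv u s \<notin> P \<Longrightarrow>
    \<forall>x\<in>E. fst x = lastv u s \<longrightarrow> closes_cycle u s x \<and> G (popped_cycle u s x)
      \<or> \<not> closes_cycle u s x \<and> cycle_game_win E P G u (s @ [x]) \<Longrightarrow>
    cycle_game_win E P G u s"

definition good_move :: "'v edge set \<Rightarrow> 'v set \<Rightarrow> ('v edge list \<Rightarrow> bool) \<Rightarrow> 'v \<Rightarrow> 'v edge list \<Rightarrow> 'v edge \<Rightarrow> bool" where
  "good_move E P G u s x \<longleftrightarrow>
     closes_cycle u s x \<and> G (popped_cycle u s x) \<or> \<not> closes_cycle u s x \<and> cycle_game_win E P G u (s @ [x])"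

lemma cycle_game_win_iff:
  "cycle_game_win E P G u s \<longleftrightarrow>
     (if lastv u s \<in> P then \<exists>x\<in>E. fst x = lastv u s \<and> good_move E P G u s x
      else \<forall>x\<in>E. fst x = lastv u s \<longrightarrow> good_move E P G u s x)"
  unfolding good_move_def by (subst cycle_game_win.simps) (auto simp del: split_paired_Ex split_paired_All)

lemma cycle_game_determined:
  assumes "finite V" "P \<inter> P' = {}" "V \<subseteq> P \<union> P'" "\<forall>x\<in>E. tgt x \<in> V"
    and "distinct (verts u s)" "set (verts u s) \<subseteq> V"
  shows "cycle_game_win E P G u s \<or> cycle_game_win E P' (\<lambda>c. \<not> G c) u s"
  using assms(5,6)
proof (induction "card V - length s" arbitrary: s rule: less_induct)
  case less
  have flip: "good_move E P' (\<lambda>c. \<not> G c) u s x" if "x \<in> E" "\<not> good_move E P G u s x" for x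
  proof (cases "closes_cycle u s x")
    case False
    have "verts u (s @ [x]) = verts u s @ [tgt x]" by (simp add: verts_def)
    then have path: "distinct (verts u (s @ [x]))" "set (verts u (s @ [x])) \<subseteq> V"
      using less.prems False that(1) assms(4) by (auto simp: closes_cycle_def)
    then have "length (verts u (s @ [x])) \<le> card V"
      using assms(1) by (metis card_mono distinct_card)
    then have "card V - length (s @ [x]) < card V - length s" by simp
    then show ?thesis
      using less.hyps[OF _ path] that(2) False by (auto simp: good_move_def)
  qed (use that in \<open>auto simp: good_move_def\<close>)
  have "lastv u s \<in> V"
    using less.prems(2) unfolding lastv_eq_last_verts by (metis last_in_set list.distinct(1) subsetD verts_def)
  then show ?case
    using flip assms(2,3) unfolding cycle_game_win_iff[of E P] cycle_game_win_iff[of E P'] by auto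
qed

definition cycle_game_strategy ::
    "'v edge set \<Rightarrow> 'v set \<Rightarrow> ('v edge list \<Rightarrow> bool) \<Rightarrow> 'v \<Rightarrow> 'v edge list \<Rightarrow> 'v edge" where
  "cycle_game_strategy E P G u es =
     (if \<exists>x. x \<in> E \<and> fst x = lastv u es \<and> good_move E P G u (stack_of u es) x
      then SOME x. x \<in> E \<and> fst x = lastv u es \<and> good_move E P G u (stack_of u es) x
      else SOME x. x \<in> E \<and> fst x = lastv u es)"

lemma strategy_cycle_game_strategy:
  assumes "\<forall>a\<in>P. \<exists>x\<in>E. fst x = a"
  shows "strategy P E (cycle_game_strategy E P G)"
  unfolding strategy_def
proof (intro allI impI)
  fix u es
  assume "lastv u es \<in> P"
  then have "\<exists>x. x \<in> E \<and> fst x = lastv u es" using assms by blast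
  then show "cycle_game_strategy E P G u es \<in> E \<and> fst (cycle_game_strategy E P G u es) = lastv u es"
    unfolding cycle_game_strategy_def
    using someI_ex[of "\<lambda>x. x \<in> E \<and> fst x = lastv u es \<and> good_move E P G u (stack_of u es) x"]
      someI_ex[of "\<lambda>x. x \<in> E \<and> fst x = lastv u es"]
    by presburger
qed

lemma good_move_cycle_game_strategy:
  assumes "x \<in> E" "fst x = lastv u es" "good_move E P G u (stack_of u es) x"
  shows "good_move E P G u (stack_of u es) (cycle_game_strategy E P G u es)"
proof -
  have ex: "\<exists>x. x \<in> E \<and> fst x = lastv u es \<and> good_move E P G u (stack_of u es) x" using assms by blast
  from someI_ex[OF ex] show ?thesis
    unfolding cycle_game_strategy_def using ex by presburger
qed

lemma cycle_game_strategy_good_move: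
  assumes "play E u e" "consistent P (cycle_game_strategy E P G) u e"
    and "cycle_game_win E P G u (play_stack u e n)"
  shows "good_move E P G u (play_stack u e n) (e n)"
proof (cases "fst (e n) \<in> P")
  case True
  have "e n = cycle_game_strategy E P G u (map e [0..<n])"
    using assms(2) True by (simp add: consistent_def)
  moreover obtain x where "x \<in> E" "fst x = fst (e n)" "good_move E P G u (play_stack u e n) x"
    using assms(3) True unfolding cycle_game_win_iff[of E P] lastv_play_stack[OF assms(1)] by (simp, blast)
  ultimately show ?thesis
    using good_move_cycle_game_strategy[of x E u "map e [0..<n]" P G] play_lastv[OF assms(1)]
    by (simp add: play_stack_def)
next
  case False
  then show ?thesis
    using assms(3) play_edge[OF assms(1)]
    unfolding cycle_game_win_iff[of E P] lastv_play_stack[OF assms(1)] by simp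
qed

text \<open>Popping a cycle returns to a prefix of the stack, so the invariant covers all prefixes.\<close>

lemma cycle_game_strategy_keeps_winning:
  assumes "play E u e" "consistent P (cycle_game_strategy E P G) u e" "cycle_game_win E P G u []"
  shows "\<forall>i\<le>length (play_stack u e n). cycle_game_win E P G u (take i (play_stack u e n))"
proof (induction n)
  case 0
  then show ?case using assms(3) by simp
next
  case (Suc n)
  let ?s = "play_stack u e n"
  show ?case
  proof (cases "closes_cycle u ?s (e n)")
    case True
    then show ?thesis using Suc by (simp add: play_stack_Suc stack_step_def min_def)
  next
    case False
    have "cycle_game_win E P G u ?s" using Suc by (metis order_refl take_all)
    then have "cycle_game_win E P G u (?s @ [e n])"
      using cycle_game_strategy_good_move[OF assms(1,2)] False by (auto simp: good_move_def)
    then show ?thesis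
      using Suc False by (auto simp: play_stack_Suc stack_step_def le_Suc_eq)
  qed
qed

lemma cycle_game_strategy_popped_cycle:
  assumes "play E u e" "consistent P (cycle_game_strategy E P G) u e" "cycle_game_win E P G u []"
    and "pops u e m"
  shows "G (play_cycle u e m)"
proof -
  have "cycle_game_win E P G u (play_stack u e m)"
    using cycle_game_strategy_keeps_winning[OF assms(1-3), of m] by (metis order_refl take_all)
  then show ?thesis
    using cycle_game_strategy_good_move[OF assms(1,2)] assms(4)
    by (auto simp: good_move_def pops_def play_cycle_def)
qed

section \<open>Mean-payoff guarantees from the first-cycle game\<close>

lemma guar_max_nonneg_if_cycle_game_win:
  fixes r :: "(nat \<Rightarrow> int) \<Rightarrow> int"
  defines "G \<equiv> \<lambda>c. 0 \<le> sum_list (map (\<lambda>x. r (fst (snd x))) c)"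
  assumes "finite V" "u \<in> V" "\<forall>x\<in>E. tgt x \<in> V" "\<forall>x\<in>E. \<bar>r (fst (snd x))\<bar> \<le> M"
    and "cycle_game_win E P G u []"
  shows "0 \<le> guar_max P E r (cycle_game_strategy E P G) u"
  unfolding guar_max_def
proof (rule Inf_greatest, clarify)
  fix e
  assume play: "play E u e" and cons: "consistent P (cycle_game_strategy E P G) u e"
  have "- (int (card V) * M) \<le> (\<Sum>j<Suc n. r (fst (snd (e j))))" for n
    using cycle_game_strategy_popped_cycle[OF play cons assms(6)]
    by (intro sum_play_ge_if_cycles_nonneg[OF play assms(3,4,2,5)]) (simp add: G_def)
  then have "eventually (\<lambda>n. 0 * real n - real_of_int (int (card V) * M)
      \<le> real_of_int (\<Sum>j<Suc n. r (fst (snd (e j))))) sequentially"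
    by (intro always_eventually allI) (metis mult_zero_left diff_0 of_int_le_iff of_int_minus)
  from liminf_avg_ge[OF this] show "0 \<le> liminf (\<lambda>n. ereal (avg r e n))"
    by (simp add: avg_eq_sum_lessThan zero_ereal_def)
qed

lemma guar_min_neg_if_cycle_game_win:
  fixes r :: "(nat \<Rightarrow> int) \<Rightarrow> int"
  defines "G \<equiv> \<lambda>c. \<not> 0 \<le> sum_list (map (\<lambda>x. r (fst (snd x))) c)"
  assumes "finite V" "u \<in> V" "\<forall>x\<in>E. tgt x \<in> V" "\<forall>x\<in>E. \<bar>r (fst (snd x))\<bar> \<le> M"
    and "cycle_game_win E P G u []"
  shows "guar_min P E r (cycle_game_strategy E P G) u \<le> ereal (- 1 / real (card V))"
  unfolding guar_min_def
proof (rule Sup_least, clarify)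
  fix e
  assume play: "play E u e" and cons: "consistent P (cycle_game_strategy E P G) u e"
  let ?N = "card V" and ?S = "\<lambda>n. \<Sum>j<Suc n. r (fst (snd (e j)))"
  have N: "?N > 0" using assms(2,3) card_gt_0_iff by blast
  have "real_of_int (?S n) \<le> (- 1 / real ?N) * real n + real_of_int (int ?N * M + 1)" for n
  proof -
    have "int ?N * ?S n \<le> int ?N * (int ?N * M + 1) - int n"
      using cycle_game_strategy_popped_cycle[OF play cons assms(6)]
        sum_play_le_if_cycles_neg[OF play assms(3,4,2,5), of "Suc n"]
      by (simp add: G_def not_le algebra_simps)
    then have "real_of_int (int ?N * ?S n) \<le> real_of_int (int ?N * (int ?N * M + 1) - int n)"
      by (simp only: of_int_le_iff)
    then have "real ?N * real_of_int (?S n) \<le> real ?N * real_of_int (int ?N * M + 1) - real n"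
      by simp
    then show ?thesis using N by (simp add: field_simps)
  qed
  from limsup_avg_le[OF always_eventually, OF allI, OF this]
  show "limsup (\<lambda>n. ereal (avg r e n)) \<le> ereal (- 1 / real ?N)"
    by (simp add: avg_eq_sum_lessThan)
qed

section \<open>Optimal strategies in the lexicographic energy game\<close>

definition strategy_edges :: "'v set \<Rightarrow> 'v edge set \<Rightarrow> ('v \<Rightarrow> 'v edge) \<Rightarrow> 'v edge set" where
  "strategy_edges P E \<sigma> = {x \<in> E. fst x \<in> P \<longrightarrow> x = \<sigma> (fst x)}"

lemma play_consistent_lift_iff:
  "play E u e \<and> consistent P (lift \<sigma>) u e \<longleftrightarrow> play (strategy_edges P E \<sigma>) u e"
proof -
  have cons: "consistent P (lift \<sigma>) u e \<longleftrightarrow> (\<forall>n. fst (e n) \<in> P \<longrightarrow> e n = \<sigma> (fst (e n)))"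
    if "play A u e" for A
    using play_lastv[OF that] by (simp add: consistent_def lift_def)
  have "play (strategy_edges P E \<sigma>) u e \<Longrightarrow> play E u e"
    by (simp add: play_def strategy_edges_def)
  then show ?thesis
    using cons[of E] by (auto simp: play_def strategy_edges_def)
qed

lemma game_graph_facts:
  assumes "game_graph V1 V2 E d"
  shows "finite (V1 \<union> V2)" "finite E" "E \<noteq> {}" "d \<ge> 1" "V1 \<inter> V2 = {}"
    "\<forall>x\<in>E. tgt x \<in> V1 \<union> V2" "\<forall>a\<in>V1 \<union> V2. \<exists>x\<in>E. fst x = a"
  using assms unfolding game_graph_def tgt_def by (fastforce split: prod.splits)+

lemma sum_mpw_neg_iff_lex_neg:
  assumes "game_graph V1 V2 E d" "set c \<subseteq> E" "length c \<le> card (V1 \<union> V2)"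
  shows "sum_list (map (\<lambda>x. mpw (V1 \<union> V2) E d (fst (snd x))) c) < 0 \<longleftrightarrow> lex_neg d (weight_sum c)"
  using scal_sum_neg_iff_lex_neg[of E c "card (V1 \<union> V2)" d] game_graph_facts[OF assms(1)] assms(2,3)
  by (simp add: mpw_def scal_sum_def)

lemma abs_mpw_le:
  assumes "game_graph V1 V2 E d"
  shows "\<forall>x\<in>E. \<bar>mpw (V1 \<union> V2) E d (fst (snd x))\<bar> \<le> scal_max (d - 1) (card (V1 \<union> V2)) E d"
  using abs_scal_le_scal_max[OF game_graph_facts(2)[OF assms]] by (simp add: mpw_def)

lemma winning1_if_guar_max_nonneg:
  assumes gg: "game_graph V1 V2 E d" and v: "v \<in> V1 \<union> V2"
    and guar: "0 \<le> guar_max V1 E (mpw (V1 \<union> V2) E d) (lift \<sigma>) v"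
  shows "winning1 V1 E d (lift \<sigma>) v"
  unfolding winning1_def lex_win1_def lex_win2_iff_lex_falls
proof (intro allI impI)
  fix e
  let ?A = "strategy_edges V1 E \<sigma>" and ?r = "mpw (V1 \<union> V2) E d"
  let ?C = "\<lambda>m l. popped_sum (\<lambda>x. fst (snd x) l) v e m"
  assume "play E v e \<and> consistent V1 (lift \<sigma>) v e"
  then have play: "play ?A v e" by (simp add: play_consistent_lift_iff)
  note gf = game_graph_facts[OF gg]
  have A: "?A \<subseteq> E" "finite ?A" "\<forall>x\<in>?A. tgt x \<in> V1 \<union> V2"
    using gf(2,6) by (auto simp: strategy_edges_def)
  have liminf: "0 \<le> liminf (\<lambda>n. ereal (avg ?r e' n))" if "play ?A v e'" for e'
  proof -
    have "play E v e' \<and> consistent V1 (lift \<sigma>) v e'"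
      using that by (simp add: play_consistent_lift_iff)
    then have "guar_max V1 E ?r (lift \<sigma>) v \<le> liminf (\<lambda>n. ereal (avg ?r e' n))"
      unfolding guar_max_def by (intro Inf_lower) blast
    with guar show ?thesis by simp
  qed
  have "\<not> lex_neg d (?C m)" for m
  proof (cases "pops v e m")
    case True
    note cycle = play_cycle_is_cycle[OF play v A(3) gf(1) True]
    have "0 \<le> sum_list (map (\<lambda>x. ?r (fst (snd x))) (play_cycle v e m))"
      using sum_play_cycle_nonneg_if_liminf_nonneg[OF _ play v A(3) gf(1) True] liminf by blast
    then show ?thesis
      using sum_mpw_neg_iff_lex_neg[OF gg _ cycle(4)] cycle(3) A(1) True
      by (simp add: popped_sum_coordinate)
  qed (simp add: popped_sum_coordinate lex_neg_def)
  then show "\<not> lex_falls d (\<lambda>l n. \<Sum>j\<le>n. fst (snd (e j)) l)"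
    using not_lex_falls_if_not_lex_neg[where C = ?C and X = "\<lambda>l n. \<Sum>j\<le>n. fst (snd (e j)) l" and d = d]
      energy_close_to_cycle_sums[OF play v A(3) gf(1) A(2)] by blast
qed

lemma winning2_if_guar_min_neg:
  assumes gg: "game_graph V1 V2 E d" and v: "v \<in> V1 \<union> V2"
    and guar: "guar_min V2 E (mpw (V1 \<union> V2) E d) (lift \<tau>) v < 0"
  shows "winning2 V2 E d (lift \<tau>) v"
  unfolding winning2_def lex_win2_iff_lex_falls
proof (intro allI impI)
  fix e
  let ?A = "strategy_edges V2 E \<tau>" and ?r = "mpw (V1 \<union> V2) E d"
  let ?C = "\<lambda>m l. popped_sum (\<lambda>x. fst (snd x) l) v e m"
  assume "play E v e \<and> consistent V2 (lift \<tau>) v e"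
  then have play: "play ?A v e" by (simp add: play_consistent_lift_iff)
  note gf = game_graph_facts[OF gg]
  have A: "?A \<subseteq> E" "finite ?A" "\<forall>x\<in>?A. tgt x \<in> V1 \<union> V2"
    using gf(2,6) by (auto simp: strategy_edges_def)
  have limsup: "limsup (\<lambda>n. ereal (avg ?r e' n)) < 0" if "play ?A v e'" for e'
  proof -
    have "play E v e' \<and> consistent V2 (lift \<tau>) v e'"
      using that by (simp add: play_consistent_lift_iff)
    then have "limsup (\<lambda>n. ereal (avg ?r e' n)) \<le> guar_min V2 E ?r (lift \<tau>) v"
      unfolding guar_min_def by (intro Sup_upper) blast
    with guar show ?thesis by simp
  qed
  have "lex_neg d (?C m)" if "pops v e m" for m
  proof -
    note cycle = play_cycle_is_cycle[OF play v A(3) gf(1) that]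
    have "sum_list (map (\<lambda>x. ?r (fst (snd x))) (play_cycle v e m)) < 0"
      using sum_play_cycle_neg_if_limsup_neg[OF _ play v A(3) gf(1) that] limsup by blast
    then show ?thesis
      using sum_mpw_neg_iff_lex_neg[OF gg _ cycle(4)] cycle(3) A(1) that
      by (simp add: popped_sum_coordinate)
  qed
  moreover have "\<forall>m. m \<notin> {m. pops v e m} \<longrightarrow> (\<forall>l. ?C m l = 0)"
    by (simp add: popped_sum_def)
  ultimately show "lex_falls d (\<lambda>l n. \<Sum>j\<le>n. fst (snd (e j)) l)"
    using lex_falls_if_lex_neg[where C = ?C and P = "{m. pops v e m}" and X = "\<lambda>l n. \<Sum>j\<le>n. fst (snd (e j)) l" and d = d]
      pops_infinite[OF play v A(3) gf(1)]
      energy_close_to_cycle_sums[OF play v A(3) gf(1) A(2)] by blast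
qed

lemma guar_max_nonneg_if_mp_value_nonneg:
  assumes "v \<in> V1 \<union> V2" "0 \<le> mp_value V1 E r v" "optimal_max V1 V2 E r \<sigma>"
  shows "0 \<le> guar_max V1 E r \<sigma> v"
proof -
  have "mp_value V1 E r v \<le> guar_max V1 E r \<sigma> v"
    unfolding mp_value_def
  proof (rule Sup_least)
    fix g
    assume "g \<in> {guar_max V1 E r \<sigma>' v | \<sigma>'. strategy V1 E \<sigma>'}"
    then show "g \<le> guar_max V1 E r \<sigma> v"
      using assms(1,3) unfolding optimal_max_def by blast
  qed
  with assms(2) show ?thesis by simp
qed

text \<open>Determinacy of the first-cycle game supplies Min with a strategy securing a negative mean
  payoff whenever Max cannot secure a non-negative one.\<close>

lemma guar_min_neg_if_mp_value_neg:
  fixes r :: "(nat \<Rightarrow> int) \<Rightarrow> int" and E :: "'v edge set"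
  assumes gg: "game_graph V1 V2 E d" and v: "v \<in> V1 \<union> V2" and neg: "mp_value V1 E r v < 0"
    and opt: "optimal_min V1 V2 E r \<tau>" and M: "\<forall>x\<in>E. \<bar>r (fst (snd x))\<bar> \<le> M"
  shows "guar_min V2 E r \<tau> v < 0"
proof -
  define G where "G = (\<lambda>c :: 'v edge list. 0 \<le> sum_list (map (\<lambda>x. r (fst (snd x))) c))"
  note gf = game_graph_facts[OF gg]
  have "cycle_game_win E V1 G v [] \<or> cycle_game_win E V2 (\<lambda>c. \<not> G c) v []"
    using cycle_game_determined[OF gf(1,5) subset_refl gf(6), of v "[]"] v by (simp add: verts_def)
  then show ?thesis
  proof
    assume "cycle_game_win E V1 G v []"
    then have "0 \<le> guar_max V1 E r (cycle_game_strategy E V1 G) v"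
      using guar_max_nonneg_if_cycle_game_win[OF gf(1) v gf(6) M] unfolding G_def by blast
    moreover have "strategy V1 E (cycle_game_strategy E V1 G)"
      using gf(7) by (intro strategy_cycle_game_strategy) blast
    then have "guar_max V1 E r (cycle_game_strategy E V1 G) v \<le> mp_value V1 E r v"
      unfolding mp_value_def by (intro Sup_upper) blast
    ultimately show ?thesis using neg by (meson order.trans not_le)
  next
    assume "cycle_game_win E V2 (\<lambda>c. \<not> G c) v []"
    then have "guar_min V2 E r (cycle_game_strategy E V2 (\<lambda>c. \<not> G c)) v
        \<le> ereal (- 1 / real (card (V1 \<union> V2)))"
      using guar_min_neg_if_cycle_game_win[OF gf(1) v gf(6) M] unfolding G_def by blast
    also have "\<dots> < 0"
    proof -
      have "card (V1 \<union> V2) > 0" using gf(1) v card_gt_0_iff by blast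
      then show ?thesis by simp
    qed
    finally have "guar_min V2 E r (cycle_game_strategy E V2 (\<lambda>c. \<not> G c)) v < 0" .
    moreover have "strategy V2 E (cycle_game_strategy E V2 (\<lambda>c. \<not> G c))"
      using gf(7) by (intro strategy_cycle_game_strategy) blast
    moreover have "guar_min V2 E r \<tau> v \<le> guar_min V2 E r (cycle_game_strategy E V2 (\<lambda>c. \<not> G c)) v"
      if "strategy V2 E (cycle_game_strategy E V2 (\<lambda>c. \<not> G c))"
      using opt v that unfolding optimal_min_def by blast
    ultimately show ?thesis by (meson le_less_trans)
  qed
qed

theorem mainTheorem3:
  fixes V1 V2 :: "'v set" and E :: "'v edge set" and d :: nat and v :: 'v
  assumes "game_graph V1 V2 E d"
    and "v \<in> V1 \<union> V2"
  shows "(mp_value V1 E (mpw (V1 \<union> V2) E d) v \<ge> 0 \<longrightarrow>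
            (\<forall>\<sigma>. positional V1 E \<sigma> \<and> optimal_max V1 V2 E (mpw (V1 \<union> V2) E d) (lift \<sigma>)
                  \<longrightarrow> winning1 V1 E d (lift \<sigma>) v))
       \<and> (mp_value V1 E (mpw (V1 \<union> V2) E d) v < 0 \<longrightarrow>
            (\<forall>\<tau>. positional V2 E \<tau> \<and> optimal_min V1 V2 E (mpw (V1 \<union> V2) E d) (lift \<tau>)
                  \<longrightarrow> winning2 V2 E d (lift \<tau>) v))"
proof (intro conjI impI allI; elim conjE)
  fix \<sigma>
  assume "0 \<le> mp_value V1 E (mpw (V1 \<union> V2) E d) v"
    and "optimal_max V1 V2 E (mpw (V1 \<union> V2) E d) (lift \<sigma>)"
  then show "winning1 V1 E d (lift \<sigma>) v"
    using winning1_if_guar_max_nonneg[OF assms] guar_max_nonneg_if_mp_value_nonneg[OF assms(2)] by blast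
next
  fix \<tau>
  assume "mp_value V1 E (mpw (V1 \<union> V2) E d) v < 0"
    and "optimal_min V1 V2 E (mpw (V1 \<union> V2) E d) (lift \<tau>)"
  then show "winning2 V2 E d (lift \<tau>) v"
    using winning2_if_guar_min_neg[OF assms]
      guar_min_neg_if_mp_value_neg[OF assms _ _ abs_mpw_le[OF assms(1)]] by blast
qed

end
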